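(* Under the standing assumptions below, let $\gamma>0$ be arbitrary (such that the $g$-proximal subproblems have minimizers) and let $\{(y^t,z^t,x^t)\}$ be generated by the PR splitting iteration. Then for every $t\ge 1$, \[ \mathcal{P}_\gamma(y^{t+1},z^{t+1},x^{t+1})-\mathcal{P}_\gamma(y^t,z^t,x^t)\le \frac12\left(-3\sigma+2L+\gamma L^2\right)\|y^{t+1}-y^t\|^2, \] and moreover $2\|y^t-z^t\|=\|x^t-x^{t-1}\|\le(1+\gamma L)\|y^{t+1}-y^t\|$.
   Context: Standing assumptions: $f:\mathbb{R}^n\to\mathbb{R}$ is differentiable and strongly convex with modulus at least $\sigma>0$ (i.e. $f-\frac{\sigma}{2}\|\cdot\|^2$ is convex), and $\nabla f$ is Lipschitz continuous with modulus at most $L>0$. The function $g:\mathbb{R}^n\to(-\infty,\infty]$ is proper and lower semicontinuous, and for the $\gamma>0$ used, the set $\operatorname{Argmin}_u\{\gamma g(u)+\frac12\|u-w\|^2\}$ is nonempty for every $w\in\mathbb{R}^n$. PR splitting iteration: given $x^0$ and $\gamma>0$, for $t=0,1,2,\dots$: $y^{t+1}=\operatorname{argmin}_y\{f(y)+\frac{1}{2\gamma}\|y-x^t\|^2\}$; $z^{t+1}\in\operatorname{Argmin}_z\{g(z)+\frac{1}{2\gamma}\|2y^{t+1}-x^t-z\|^2\}$ (any choice); $x^{t+1}=x^t+2(z^{t+1}-y^{t+1})$. Merit function: $\mathcal{P}_\gamma(y,z,x):=f(y)+g(z)-\frac{3}{2\gamma}\|y-z\|^2+\frac{1}{\gamma}\langle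 x-y,z-y\rangle$. *)

theory Defs
  imports "HOL-Analysis.Analysis"
begin

definition lsc_fun :: "('a::topological_space \<Rightarrow> ereal) \<Rightarrow> bool" where
  "lsc_fun g \<longleftrightarrow> (\<forall>x. g x \<le> Liminf (at x) g)"

definition proper_fun :: "('a \<Rightarrow> ereal) \<Rightarrow> bool" where
  "proper_fun g \<longleftrightarrow> (\<forall>x. g x \<noteq> -\<infinity>) \<and> (\<exists>x. g x \<noteq> \<infinity>)"

definition PR_merit ::
  "('a::real_inner \<Rightarrow> real) \<Rightarrow> ('a \<Rightarrow> ereal) \<Rightarrow> real \<Rightarrow> 'a \<Rightarrow> 'a \<Rightarrow> 'a \<Rightarrow> ereal" where
  "PR_merit f g \<gamma> y z x =
     ereal (f y) + g z
     + ereal (- 3 / (2 * \<gamma>) * (norm (y - z))\<^sup>2 + (1 / \<gamma>) * ((x - y) \<bullet> (z - y)))"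

end

theory Submission
  imports Defs
begin

text \<open>
  Write \<open>y, z, x\<close> for the iterates at step \<open>t\<close> and \<open>y', z', x'\<close> for those at step \<open>t + 1\<close>.
  Optimality of the \<open>y\<close>-steps gives \<open>\<gamma> \<nabla>f(y') = x - y'\<close> and \<open>\<gamma> \<nabla>f(y) = x\<^sub>p\<^sub>r\<^sub>e\<^sub>v - y\<close>.
  Substituting the update \<open>x' = x + 2(z' - y')\<close> into the merit function shows that
  \<open>P\<^sub>\<gamma>(y', z', x')\<close> is \<open>f(y') - \<parallel>x - y'\<parallel>\<^sup>2/(2\<gamma>)\<close> plus the value of the \<open>z\<close>-subproblem at its
  minimizer \<open>z'\<close>. Bounding that value by its value at the old point \<open>z\<close>, the change of merit is at
  most \<open>f(y') - f(y) + \<langle>\<nabla>f(y'), y - y'\<rangle> + \<gamma>/2 \<parallel>\<nabla>f(y') - \<nabla>f(y)\<parallel>\<^sup>2\<close>, which strong convexity and the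
  Lipschitz bound control; these two also force \<open>\<sigma> \<le> L\<close>. The second claim is the triangle
  inequality for \<open>x - x\<^sub>p\<^sub>r\<^sub>e\<^sub>v = \<gamma>(\<nabla>f(y') - \<nabla>f(y)) + (y' - y)\<close>.
\<close>

lemma convex_on_above_tangent:
  fixes h :: "'a::real_normed_vector \<Rightarrow> real"
  assumes convex: "convex_on UNIV h" and deriv: "(h has_derivative h') (at a)"
  shows "h a + h' (b - a) \<le> h b"
proof -
  define \<phi> where "\<phi> = (\<lambda>s::real. h (a + s *\<^sub>R (b - a)))"
  have "convex_on UNIV \<phi>"
  proof (rule convex_onI)
    fix t s r :: real
    assume "0 < t" "t < 1"
    have "(1 - t) *\<^sub>R (a + s *\<^sub>R (b - a)) + t *\<^sub>R (a + r *\<^sub>R (b - a))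
          = a + ((1 - t) * s + t * r) *\<^sub>R (b - a)"
      by (simp add: algebra_simps)
    with convex_onD[OF convex, of t "a + s *\<^sub>R (b - a)" "a + r *\<^sub>R (b - a)"] \<open>0 < t\<close> \<open>t < 1\<close>
    show "\<phi> ((1 - t) *\<^sub>R s + t *\<^sub>R r) \<le> (1 - t) * \<phi> s + t * \<phi> r"
      by (simp add: \<phi>_def)
  qed simp
  moreover have "((\<lambda>s. a + s *\<^sub>R (b - a)) has_derivative (\<lambda>s. s *\<^sub>R (b - a))) (at 0)"
    by (auto intro!: derivative_eq_intros)
  from diff_chain_at[OF this] deriv
  have "(\<phi> has_derivative (\<lambda>s. h' (s *\<^sub>R (b - a)))) (at 0)"
    by (simp add: \<phi>_def o_def)
  then have "(\<phi> has_field_derivative h' (b - a)) (at 0)"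
    using has_derivative_linear[OF deriv]
    by (simp add: has_field_derivative_def linear_scale mult.commute[of _ "h' (b - a)"])
  ultimately have "\<phi> 1 - \<phi> 0 \<ge> h' (b - a) * (1 - 0)"
    by (intro convex_on_imp_above_tangent) auto
  then show ?thesis by (simp add: \<phi>_def)
qed

lemma strongly_convex_gradient_ineq:
  fixes f :: "'a::real_inner \<Rightarrow> real"
  assumes f_grad: "\<And>u. (f has_derivative (\<lambda>h. gradf u \<bullet> h)) (at u)"
    and f_strong: "convex_on UNIV (\<lambda>u. f u - \<sigma> / 2 * (norm u)\<^sup>2)"
  shows "f a + gradf a \<bullet> (b - a) + \<sigma> / 2 * (norm (b - a))\<^sup>2 \<le> f b"
proof -
  have "((\<lambda>u. f u - \<sigma> / 2 * (u \<bullet> u)) has_derivative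
          (\<lambda>k. gradf a \<bullet> k - \<sigma> / 2 * (a \<bullet> k + k \<bullet> a))) (at a)"
    by (auto intro!: derivative_eq_intros f_grad)
  from convex_on_above_tangent[OF f_strong[unfolded power2_norm_eq_inner] this, of b]
  show ?thesis
    by (simp add: power2_norm_eq_inner inner_diff_left inner_diff_right inner_commute algebra_simps)
qed

lemma strongly_convex_gradient_monotone:
  fixes f :: "'a::real_inner \<Rightarrow> real"
  assumes "\<And>u. (f has_derivative (\<lambda>h. gradf u \<bullet> h)) (at u)"
    and "convex_on UNIV (\<lambda>u. f u - \<sigma> / 2 * (norm u)\<^sup>2)"
  shows "\<sigma> * (norm (a - b))\<^sup>2 \<le> (gradf a - gradf b) \<bullet> (a - b)"
  using strongly_convex_gradient_ineq[OF assms, of a b] strongly_convex_gradient_ineq[OF assms, of b a]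
  by (simp add: inner_diff_left inner_diff_right norm_minus_commute algebra_simps)

lemma strong_convexity_modulus_le_Lipschitz:
  fixes f :: "'a::real_inner \<Rightarrow> real" and a b :: 'a
  assumes "\<And>u. (f has_derivative (\<lambda>h. gradf u \<bullet> h)) (at u)"
    and "convex_on UNIV (\<lambda>u. f u - \<sigma> / 2 * (norm u)\<^sup>2)"
    and grad_lip: "\<And>u v. norm (gradf u - gradf v) \<le> L * norm (u - v)"
  shows "\<sigma> * (norm (a - b))\<^sup>2 \<le> L * (norm (a - b))\<^sup>2"
proof -
  have "\<sigma> * (norm (a - b))\<^sup>2 \<le> (gradf a - gradf b) \<bullet> (a - b)"
    by (rule strongly_convex_gradient_monotone[OF assms(1,2)])
  also have "\<dots> \<le> norm (gradf a - gradf b) * norm (a - b)"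
    by (rule norm_cauchy_schwarz)
  also have "\<dots> \<le> L * norm (a - b) * norm (a - b)"
    by (simp add: grad_lip mult_right_mono)
  finally show ?thesis by (simp add: power2_eq_square)
qed

lemma prox_arg_min_gradient:
  fixes f :: "'a::real_inner \<Rightarrow> real"
  assumes f_grad: "\<And>u. (f has_derivative (\<lambda>h. gradf u \<bullet> h)) (at u)"
    and "\<gamma> > 0"
    and arg_min: "is_arg_min (\<lambda>v. f v + (norm (v - x))\<^sup>2 / (2 * \<gamma>)) (\<lambda>_. True) y"
  shows "\<gamma> *\<^sub>R gradf y = x - y"
proof -
  define w where "w = gradf y + (1 / \<gamma>) *\<^sub>R (y - x)"
  let ?F = "\<lambda>v. f v + ((v - x) \<bullet> (v - x)) / (2 * \<gamma>)"
  have "(?F has_derivative (\<lambda>h. gradf y \<bullet> h + ((y - x) \<bullet> h + h \<bullet> (y - x)) / (2 * \<gamma>))) (at y)"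
    using \<open>\<gamma> > 0\<close> by (auto intro!: derivative_eq_intros f_grad simp: field_simps)
  moreover have "gradf y \<bullet> h + ((y - x) \<bullet> h + h \<bullet> (y - x)) / (2 * \<gamma>) = w \<bullet> h" for h
    using \<open>\<gamma> > 0\<close> by (simp add: w_def inner_add_left inner_diff_left inner_commute[of h] field_simps)
  ultimately have "(?F has_derivative (\<lambda>h. w \<bullet> h)) (at y)"
    by simp
  moreover have "\<forall>v\<in>UNIV. ?F y \<le> ?F v"
    using arg_min by (auto simp: is_arg_min_def power2_norm_eq_inner not_less)
  ultimately have "(\<lambda>h. w \<bullet> h) = (\<lambda>h. 0)"
    by (intro differential_zero_maxmin[of y UNIV]) auto
  then have "w = 0"
    by (metis inner_eq_zero_iff)
  moreover have "\<gamma> *\<^sub>R w = \<gamma> *\<^sub>R gradf y - (x - y)"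
    using \<open>\<gamma> > 0\<close> by (simp add: w_def scaleR_add_right)
  ultimately show ?thesis
    by simp
qed

lemma arg_min_proper_finite:
  assumes "proper_fun g"
    and "is_arg_min (\<lambda>v. g v + ereal (q v)) (\<lambda>_. True) z"
  shows "\<bar>g z\<bar> \<noteq> \<infinity>"
proof -
  obtain u where "g u \<noteq> \<infinity>"
    using assms(1) unfolding proper_fun_def by auto
  moreover have "g z + ereal (q z) \<le> g u + ereal (q u)"
    using assms(2) by (auto simp: is_arg_min_def not_less)
  ultimately have "g z \<noteq> \<infinity>" by auto
  moreover have "g z \<noteq> -\<infinity>"
    using assms(1) unfolding proper_fun_def by auto
  ultimately show ?thesis by auto
qed

lemma PR_merit_reflection:
  fixes y z x :: "'a::real_inner"
  assumes "\<gamma> \<noteq> 0"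
  shows "PR_merit f g \<gamma> y z (x + 2 *\<^sub>R (z - y))
       = ereal (f y) + g z + ereal ((norm (2 *\<^sub>R y - x - z))\<^sup>2 / (2 * \<gamma>) - (norm (x - y))\<^sup>2 / (2 * \<gamma>))"
proof -
  have "- 3 / (2 * \<gamma>) * (norm (y - z))\<^sup>2 + (1 / \<gamma>) * ((x + 2 *\<^sub>R (z - y) - y) \<bullet> (z - y))
      = (norm (2 *\<^sub>R y - x - z))\<^sup>2 / (2 * \<gamma>) - (norm (x - y))\<^sup>2 / (2 * \<gamma>)"
    using assms unfolding power2_norm_eq_inner
    by (simp add: inner_add_left inner_add_right inner_diff_left inner_diff_right inner_commute field_simps)
  then show ?thesis
    unfolding PR_merit_def by simp
qed

lemma PR_quadratic_difference:
  fixes a b z x0 x1 :: "'a::real_inner"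
  assumes "x1 = x0 + 2 *\<^sub>R (z - b)"
  shows "(norm (2 *\<^sub>R a - x1 - z))\<^sup>2 / (2 * \<gamma>) - (norm (x1 - a))\<^sup>2 / (2 * \<gamma>)
           - ((norm (2 *\<^sub>R b - x0 - z))\<^sup>2 / (2 * \<gamma>) - (norm (x0 - b))\<^sup>2 / (2 * \<gamma>))
       = ((x1 - a) \<bullet> (b - a)) / \<gamma> + (norm ((x1 - a) - (x0 - b)))\<^sup>2 / (2 * \<gamma>)"
proof -
  have "(norm (2 *\<^sub>R a - x1 - z))\<^sup>2 - (norm (x1 - a))\<^sup>2 - (norm (2 *\<^sub>R b - x0 - z))\<^sup>2 + (norm (x0 - b))\<^sup>2
      = 2 * ((x1 - a) \<bullet> (b - a)) + (norm ((x1 - a) - (x0 - b)))\<^sup>2"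
    unfolding assms power2_norm_eq_inner by (simp add: inner_simps algebra_simps inner_commute)
  then have "((norm (2 *\<^sub>R a - x1 - z))\<^sup>2 - (norm (x1 - a))\<^sup>2 - (norm (2 *\<^sub>R b - x0 - z))\<^sup>2
               + (norm (x0 - b))\<^sup>2) / (2 * \<gamma>)
      = (2 * ((x1 - a) \<bullet> (b - a)) + (norm ((x1 - a) - (x0 - b)))\<^sup>2) / (2 * \<gamma>)"
    by simp
  then show ?thesis
    by (simp add: diff_divide_distrib add_divide_distrib)
qed

lemma PR_merit_descent:
  fixes f :: "'a::real_inner \<Rightarrow> real" and g :: "'a \<Rightarrow> ereal"
  assumes f_grad: "\<And>u. (f has_derivative (\<lambda>h. gradf u \<bullet> h)) (at u)"
    and f_strong: "convex_on UNIV (\<lambda>u. f u - \<sigma> / 2 * (norm u)\<^sup>2)"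
    and grad_lip: "\<And>u v. norm (gradf u - gradf v) \<le> L * norm (u - v)"
    and "\<gamma> > 0"
    and grad_a: "\<gamma> *\<^sub>R gradf a = x1 - a" and grad_b: "\<gamma> *\<^sub>R gradf b = x0 - b"
    and x1_eq: "x1 = x0 + 2 *\<^sub>R (z0 - b)" and x2_eq: "x2 = x1 + 2 *\<^sub>R (z1 - a)"
    and z1_le: "g z1 + ereal ((norm (2 *\<^sub>R a - x1 - z1))\<^sup>2 / (2 * \<gamma>))
                  \<le> g z0 + ereal ((norm (2 *\<^sub>R a - x1 - z0))\<^sup>2 / (2 * \<gamma>))"
    and "\<bar>g z0\<bar> \<noteq> \<infinity>" "\<bar>g z1\<bar> \<noteq> \<infinity>"
  shows "PR_merit f g \<gamma> a z1 x2 - PR_merit f g \<gamma> b z0 x1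
           \<le> ereal ((- 3 * \<sigma> + 2 * L + \<gamma> * L\<^sup>2) / 2 * (norm (a - b))\<^sup>2)"
proof -
  obtain g0 g1 where g0: "g z0 = ereal g0" and g1: "g z1 = ereal g1"
    using \<open>\<bar>g z0\<bar> \<noteq> \<infinity>\<close> \<open>\<bar>g z1\<bar> \<noteq> \<infinity>\<close> by (cases "g z0"; cases "g z1") auto
  define Q where "Q u x z = (norm (2 *\<^sub>R u - x - z))\<^sup>2 / (2 * \<gamma>) - (norm (x - u))\<^sup>2 / (2 * \<gamma>)" for u x z :: 'a
  have "\<gamma> \<noteq> 0" using \<open>\<gamma> > 0\<close> by simp
  have merit_a: "PR_merit f g \<gamma> a z1 x2 = ereal (f a + g1 + Q a x1 z1)"
    using PR_merit_reflection[OF \<open>\<gamma> \<noteq> 0\<close>, of f g a z1 x1] by (simp add: x2_eq g1 Q_def)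
  have merit_b: "PR_merit f g \<gamma> b z0 x1 = ereal (f b + g0 + Q b x0 z0)"
    using PR_merit_reflection[OF \<open>\<gamma> \<noteq> 0\<close>, of f g b z0 x0] by (simp add: x1_eq g0 Q_def)
  have "g1 + Q a x1 z1 \<le> g0 + Q a x1 z0"
    using z1_le by (simp add: g0 g1 Q_def)
  moreover have "Q a x1 z0 - Q b x0 z0 = gradf a \<bullet> (b - a) + \<gamma> / 2 * (norm (gradf a - gradf b))\<^sup>2"
  proof -
    have "((x1 - a) \<bullet> (b - a)) / \<gamma> = gradf a \<bullet> (b - a)"
      using \<open>\<gamma> \<noteq> 0\<close> by (simp flip: grad_a)
    moreover have "(norm ((x1 - a) - (x0 - b)))\<^sup>2 / (2 * \<gamma>) = \<gamma> / 2 * (norm (gradf a - gradf b))\<^sup>2"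
      using \<open>\<gamma> > 0\<close>
      by (simp add: grad_a[symmetric] grad_b[symmetric] flip: scaleR_right_diff_distrib)
         (simp add: power2_eq_square)
    ultimately show ?thesis
      using PR_quadratic_difference[OF x1_eq, of a \<gamma>] by (simp add: Q_def)
  qed
  moreover have "f a + gradf a \<bullet> (b - a) \<le> f b - \<sigma> / 2 * (norm (a - b))\<^sup>2"
    using strongly_convex_gradient_ineq[OF f_grad f_strong, of a b] by (simp add: norm_minus_commute)
  moreover have "(norm (gradf a - gradf b))\<^sup>2 \<le> L\<^sup>2 * (norm (a - b))\<^sup>2"
    by (metis grad_lip norm_ge_zero power_mono power_mult_distrib)
  then have "\<gamma> / 2 * (norm (gradf a - gradf b))\<^sup>2 \<le> \<gamma> / 2 * (L\<^sup>2 * (norm (a - b))\<^sup>2)"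
    using \<open>\<gamma> > 0\<close> by (simp add: mult_left_mono)
  \<comment> \<open>used to weaken \<open>-\<sigma>/2\<close> to \<open>(2L - 3\<sigma>)/2\<close>\<close>
  moreover have "\<sigma> * (norm (a - b))\<^sup>2 \<le> L * (norm (a - b))\<^sup>2"
    by (rule strong_convexity_modulus_le_Lipschitz[OF f_grad f_strong grad_lip])
  ultimately have "(f a + g1 + Q a x1 z1) - (f b + g0 + Q b x0 z0)
                     \<le> (- 3 * \<sigma> + 2 * L + \<gamma> * L\<^sup>2) / 2 * (norm (a - b))\<^sup>2"
    by (simp add: algebra_simps)
  then show ?thesis
    by (simp add: merit_a merit_b)
qed

lemma PR_increment_bound:
  fixes gradf :: "'a::real_normed_vector \<Rightarrow> 'a"
  assumes grad_lip: "\<And>u v. norm (gradf u - gradf v) \<le> L * norm (u - v)"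
    and "\<gamma> > 0"
    and grad_a: "\<gamma> *\<^sub>R gradf a = x1 - a" and grad_b: "\<gamma> *\<^sub>R gradf b = x0 - b"
  shows "norm (x1 - x0) \<le> (1 + \<gamma> * L) * norm (a - b)"
proof -
  have "x1 - x0 = \<gamma> *\<^sub>R (gradf a - gradf b) + (a - b)"
    using grad_a grad_b by (simp add: algebra_simps)
  then have "norm (x1 - x0) \<le> \<gamma> * norm (gradf a - gradf b) + norm (a - b)"
    using \<open>\<gamma> > 0\<close> by (metis abs_of_pos norm_scaleR norm_triangle_ineq)
  also have "\<dots> \<le> \<gamma> * (L * norm (a - b)) + norm (a - b)"
    using grad_lip[of a b] \<open>\<gamma> > 0\<close> by simp
  finally show ?thesis
    by (simp add: algebra_simps)
qed

theorem mainTheorem2: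
  fixes f :: "'a::euclidean_space \<Rightarrow> real"
    and gradf :: "'a \<Rightarrow> 'a"
    and g :: "'a \<Rightarrow> ereal"
    and \<sigma> L \<gamma> :: real
    and y z x :: "nat \<Rightarrow> 'a"
    and t :: nat
  assumes f_grad: "\<And>u. (f has_derivative (\<lambda>h. gradf u \<bullet> h)) (at u)"
    and \<sigma>_pos: "\<sigma> > 0"
    and f_strong: "convex_on UNIV (\<lambda>u. f u - \<sigma> / 2 * (norm u)\<^sup>2)"
    and L_pos: "L > 0"
    and grad_lip: "\<And>u v. norm (gradf u - gradf v) \<le> L * norm (u - v)"
    and g_proper: "proper_fun g"
    and g_lsc: "lsc_fun g"
    and \<gamma>_pos: "\<gamma> > 0"
    and prox_ex: "\<And>w. \<exists>u. is_arg_min (\<lambda>u. ereal \<gamma> * g u + ereal ((norm (u - w))\<^sup>2 / 2)) (\<lambda>_. True) u"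
    and y_step: "\<And>s. is_arg_min (\<lambda>v. f v + (norm (v - x s))\<^sup>2 / (2 * \<gamma>)) (\<lambda>_. True) (y (Suc s))"
    and z_step: "\<And>s. is_arg_min (\<lambda>v. g v + ereal ((norm (2 *\<^sub>R y (Suc s) - x s - v))\<^sup>2 / (2 * \<gamma>)))
                         (\<lambda>_. True) (z (Suc s))"
    and x_step: "\<And>s. x (Suc s) = x s + 2 *\<^sub>R (z (Suc s) - y (Suc s))"
    and t_ge: "t \<ge> 1"
  shows "PR_merit f g \<gamma> (y (Suc t)) (z (Suc t)) (x (Suc t)) - PR_merit f g \<gamma> (y t) (z t) (x t)
           \<le> ereal ((- 3 * \<sigma> + 2 * L + \<gamma> * L\<^sup>2) / 2 * (norm (y (Suc t) - y t))\<^sup>2)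
         \<and> 2 * norm (y t - z t) = norm (x t - x (t - 1))
         \<and> norm (x t - x (t - 1)) \<le> (1 + \<gamma> * L) * norm (y (Suc t) - y t)"
proof -
  \<comment> \<open>\<open>\<sigma>_pos\<close>, \<open>L_pos\<close>, \<open>g_lsc\<close> and \<open>prox_ex\<close> only ensure that the iteration exists.\<close>
  obtain n where t: "t = Suc n"
    using t_ge by (cases t) auto
  have grad: "\<gamma> *\<^sub>R gradf (y (Suc s)) = x s - y (Suc s)" for s
    by (rule prox_arg_min_gradient[OF f_grad \<gamma>_pos y_step])
  have g_finite: "\<bar>g (z (Suc s))\<bar> \<noteq> \<infinity>" for s
    by (rule arg_min_proper_finite[OF g_proper z_step])
  have z_le: "g (z (Suc t)) + ereal ((norm (2 *\<^sub>R y (Suc t) - x t - z (Suc t)))\<^sup>2 / (2 * \<gamma>))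
              \<le> g (z t) + ereal ((norm (2 *\<^sub>R y (Suc t) - x t - z t))\<^sup>2 / (2 * \<gamma>))"
    using z_step[of t] by (auto simp: is_arg_min_def not_less)
  have "PR_merit f g \<gamma> (y (Suc t)) (z (Suc t)) (x (Suc t)) - PR_merit f g \<gamma> (y t) (z t) (x t)
          \<le> ereal ((- 3 * \<sigma> + 2 * L + \<gamma> * L\<^sup>2) / 2 * (norm (y (Suc t) - y t))\<^sup>2)"
    using PR_merit_descent[OF f_grad f_strong grad_lip \<gamma>_pos grad[of "Suc n"] grad[of n]
        x_step[of n] x_step[of "Suc n"] z_le[unfolded t] g_finite[of n] g_finite[of "Suc n"]]
    by (simp add: t)
  moreover have "2 * norm (y t - z t) = norm (x t - x (t - 1))"
    using x_step[of n] by (simp add: t norm_minus_commute)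
  moreover have "norm (x t - x (t - 1)) \<le> (1 + \<gamma> * L) * norm (y (Suc t) - y t)"
    using PR_increment_bound[OF grad_lip \<gamma>_pos grad grad] by (simp add: t)
  ultimately show ?thesis
    by blast
qed

end
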